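(* (Simulation of $\lambda_{\mathrm{act}}$ configurations in $\lambda_{\mathrm{ch}}$.) If $\Gamma ; \Delta \vdash \mathcal{C}_1$ in $\lambda_{\mathrm{act}}$ and $\mathcal{C}_1 \longrightarrow \mathcal{C}_2$, then there exists some $\lambda_{\mathrm{ch}}$ configuration $\mathcal{D}$ such that $[\![\mathcal{C}_1]\!] \longrightarrow^{*} \mathcal{D}$ with $\mathcal{D} \equiv [\![\mathcal{C}_2]\!]$.
   Context: $\lambda_{\mathrm{act}}$: types $A,B,C ::= \mathbf{1}\mid A\xrightarrow{C}B\mid\mathsf{ActorRef}(A)$; $\alpha$ ranges over variables and names; values $V,W ::= \alpha\mid\lambda x.M\mid()$; computations $M ::= V\,W\mid\mathbf{let}\ x\Leftarrow M\ \mathbf{in}\ N\mid\mathbf{return}\ V\mid\mathbf{spawn}\ M\mid\mathbf{send}\ V\ W\mid\mathbf{receive}\mid\mathbf{self}$; value typing ($\lambda x.M:A\xrightarrow{C}B$ if $\Gamma,x:A\mid C\vdash M:B$; variables/names from $\Gamma$; $():\mathbf 1$); computation typing $\Gamma\mid C\vdash M:A$ ($V\,W:B$ if $V:A\xrightarrow{C}B$, $W:A$; $\mathbf{let}$ under $C$; $\mathbf{return}\ V:A$ if $V:A$; $\mathbf{send}\ V\ W:\mathbf 1$ if $V:A$, $W:\mathsf{ActorRef}(A)$; $\Gamma\mid A\vdash\mathbf{receive}:A$; $\Gamma\mid C\vdash\mathbf{spawn}\ M:\mathsf{ActorRef}(A)$ if $\Gamma\mid A\vdash M:\mathbf 1$;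 $\Gamma\mid A\vdash\mathbf{self}:\mathsf{ActorRef}(A)$). Configurations $\mathcal{C}::=\mathcal{C}\parallel\mathcal{D}\mid(\nu a)\mathcal{C}\mid\langle a,M,\vec V\rangle$; typing (Par: disjoint split of linear $\Delta$; Pid: $\Gamma,a:\mathsf{ActorRef}(A);\Delta,a:A\vdash\mathcal{C}$ gives $\Gamma;\Delta\vdash(\nu a)\mathcal{C}$; Actor: $\Gamma,a:\mathsf{ActorRef}(A)\mid A\vdash M:\mathbf 1$ and $\Gamma,a:\mathsf{ActorRef}(A)\vdash V_i:A$ give $\Gamma,a:\mathsf{ActorRef}(A);a:A\vdash\langle a,M,\vec V\rangle$). $\lambda_{\mathrm{ch}}$: types $\mathbf 1\mid A\to B\mid\mathsf{Chan}(A)$; computations $V\,W\mid\mathbf{let}\ x\Leftarrow M\ \mathbf{in}\ N\mid\mathbf{return}\ V\mid\mathbf{fork}\ M\mid\mathbf{give}\ V\ W\mid\mathbf{take}\ V\mid\mathbf{newCh}$; configurations $\mathcal{C}\parallel\mathcal{D}\mid(\nu a)\mathcal{C}\mid a(\vec V)\mid M$ ($a(\vec V)$ a buffer). In both calculi: evaluation contexts $E::=[\,]\mid\mathbf{let}\ x\Leftarrow E\ \mathbf{in}\ M$; term reduction $(\lambda x.M)V\longrightarrow_{\mathsf{M}}M\{V/x\}$, $\mathbf{let}\ x\Leftarrow\mathbf{return}\ V\ \mathbf{in}\ M\longrightarrow_{\mathsf{M}}M\{V/x\}$, $E[M]\longrightarrow_{\mathsf{M}}E[M']$ if $M\longrightarrow_{\mathsf{M}}M'$;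 configuration contexts $G::=[\,]\mid G\parallel\mathcal{C}\mid(\nu a)G$; $\equiv$ is the least congruence closed under $G[-]$ with commutativity and associativity of $\parallel$ and $\mathcal{C}\parallel(\nu a)\mathcal{D}\equiv(\nu a)(\mathcal{C}\parallel\mathcal{D})$ if $a\notin\mathsf{fv}(\mathcal{C})$; configuration reduction $\longrightarrow$ is defined modulo $\equiv$ and closed under $G[-]$. $\lambda_{\mathrm{act}}$ reductions: $\langle a,E[\mathbf{spawn}\ M],\vec V\rangle\longrightarrow(\nu b)(\langle a,E[\mathbf{return}\ b],\vec V\rangle\parallel\langle b,M,\epsilon\rangle)$ ($b$ fresh); $\langle a,E[\mathbf{send}\ V'\ b],\vec V\rangle\parallel\langle b,M,\vec W\rangle\longrightarrow\langle a,E[\mathbf{return}\ ()],\vec V\rangle\parallel\langle b,M,\vec W\cdot V'\rangle$; $\langle a,E[\mathbf{send}\ V'\ a],\vec V\rangle\longrightarrow\langle a,E[\mathbf{return}\ ()],\vec V\cdot V'\rangle$; $\langle a,E[\mathbf{self}],\vec V\rangle\longrightarrow\langle a,E[\mathbf{return}\ a],\vec V\rangle$; $\langle a,E[\mathbf{receive}],W\cdot\vec V\rangle\longrightarrow\langle a,E[\mathbf{return}\ W],\vec V\rangle$; $\langle a,M_1,\vec V\rangle\longrightarrow\langle a,M_2,\vec V\rangle$ if $M_1\longrightarrow_{\mathsf{M}}M_2$. $\lambda_{\mathrm{ch}}$ reductions: $E[\mathbf{give}\ W\ a]\parallel a(\vec V)\longrightarrow E[\mathbf{return}\ ()]\parallel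 a(\vec V\cdot W)$; $E[\mathbf{take}\ a]\parallel a(W\cdot\vec V)\longrightarrow E[\mathbf{return}\ W]\parallel a(\vec V)$; $E[\mathbf{fork}\ M]\longrightarrow E[\mathbf{return}\ ()]\parallel M$; $E[\mathbf{newCh}]\longrightarrow(\nu a)(E[\mathbf{return}\ a]\parallel a(\epsilon))$ ($a$ fresh); $G[M_1]\longrightarrow G[M_2]$ if $M_1\longrightarrow_{\mathsf{M}}M_2$. $\longrightarrow^{*}$ is the reflexive–transitive closure. Translation $[\![-]\!]$ from $\lambda_{\mathrm{act}}$ to $\lambda_{\mathrm{ch}}$: values $[\![x]\!]=x$, $[\![a]\!]=a$, $[\![()]\!]=()$, $[\![\lambda x.M]\!]=\lambda x.\lambda ch.([\![M]\!]ch)$; computations parameterised by $ch$: $[\![\mathbf{let}\ x\Leftarrow M\ \mathbf{in}\ N]\!]ch=\mathbf{let}\ x\Leftarrow[\![M]\!]ch\ \mathbf{in}\ [\![N]\!]ch$, $[\![V\,W]\!]ch=\mathbf{let}\ f\Leftarrow([\![V]\!]\,[\![W]\!])\ \mathbf{in}\ f\,ch$, $[\![\mathbf{return}\ V]\!]ch=\mathbf{return}\ [\![V]\!]$, $[\![\mathbf{self}]\!]ch=\mathbf{return}\ ch$, $[\![\mathbf{receive}]\!]ch=\mathbf{take}\ ch$, $[\![\mathbf{spawn}\ M]\!]ch=\mathbf{let}\ chMb\Leftarrow\mathbf{newCh}\ \mathbf{in}\ \mathbf{let}\ y\Leftarrow\mathbf{fork}([\![M]\!]chMb)\ \mathbf{in}\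 \mathbf{return}\ chMb$, $[\![\mathbf{send}\ V\ W]\!]ch=\mathbf{give}\ [\![V]\!]\ [\![W]\!]$; configurations $[\![\mathcal{C}_1\parallel\mathcal{C}_2]\!]=[\![\mathcal{C}_1]\!]\parallel[\![\mathcal{C}_2]\!]$, $[\![(\nu a)\mathcal{C}]\!]=(\nu a)[\![\mathcal{C}]\!]$, $[\![\langle a,M,\vec V\rangle]\!]=a([\![\vec V]\!])\parallel([\![M]\!]a)$. *)

theory Defs
  imports Main
begin

text \<open>Variables are de Bruijn indices (so substitution is capture-avoiding and
terms are identified up to alpha-conversion); names (actor names / channel
names) are atoms of type nat.\<close>

datatype ty = TUnit | TFun ty ty ty  \<comment> \<open>TFun A C B  is  A -C-> B\<close> | TActorRef ty

section \<open>lambda_act syntax\<close>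

datatype aval = AVar nat | AName nat | ALam acomp | AUnit
and acomp = AApp aval aval | ALet acomp acomp | AReturn aval | ASpawn acomp
  | ASend aval aval | AReceive | ASelf

datatype aconf = APar aconf aconf | ANu nat aconf | AActor nat acomp "aval list"

primrec alift_v :: "nat \<Rightarrow> aval \<Rightarrow> aval" and alift_c :: "nat \<Rightarrow> acomp \<Rightarrow> acomp" where
  "alift_v k (AVar i) = AVar (if i < k then i else Suc i)"
| "alift_v k (AName a) = AName a"
| "alift_v k (ALam M) = ALam (alift_c (Suc k) M)"
| "alift_v k AUnit = AUnit"
| "alift_c k (AApp V W) = AApp (alift_v k V) (alift_v k W)"
| "alift_c k (ALet M N) = ALet (alift_c k M) (alift_c (Suc k) N)"
| "alift_c k (AReturn V) = AReturn (alift_v k V)"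
| "alift_c k (ASpawn M) = ASpawn (alift_c k M)"
| "alift_c k (ASend V W) = ASend (alift_v k V) (alift_v k W)"
| "alift_c k AReceive = AReceive"
| "alift_c k ASelf = ASelf"

primrec asubst_v :: "aval \<Rightarrow> nat \<Rightarrow> aval \<Rightarrow> aval"
  and asubst_c :: "acomp \<Rightarrow> nat \<Rightarrow> aval \<Rightarrow> acomp" where
  "asubst_v (AVar i) j U = (if i < j then AVar i else if i = j then U else AVar (i - 1))"
| "asubst_v (AName a) j U = AName a"
| "asubst_v (ALam M) j U = ALam (asubst_c M (Suc j) (alift_v 0 U))"
| "asubst_v AUnit j U = AUnit"
| "asubst_c (AApp V W) j U = AApp (asubst_v V j U) (asubst_v W j U)"
| "asubst_c (ALet M N) j U = ALet (asubst_c M j U) (asubst_c N (Suc j) (alift_v 0 U))"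
| "asubst_c (AReturn V) j U = AReturn (asubst_v V j U)"
| "asubst_c (ASpawn M) j U = ASpawn (asubst_c M j U)"
| "asubst_c (ASend V W) j U = ASend (asubst_v V j U) (asubst_v W j U)"
| "asubst_c AReceive j U = AReceive"
| "asubst_c ASelf j U = ASelf"

primrec afn_v :: "aval \<Rightarrow> nat set" and afn_c :: "acomp \<Rightarrow> nat set" where
  "afn_v (AVar i) = {}"
| "afn_v (AName a) = {a}"
| "afn_v (ALam M) = afn_c M"
| "afn_v AUnit = {}"
| "afn_c (AApp V W) = afn_v V \<union> afn_v W"
| "afn_c (ALet M N) = afn_c M \<union> afn_c N"
| "afn_c (AReturn V) = afn_v V"
| "afn_c (ASpawn M) = afn_c M"
| "afn_c (ASend V W) = afn_v V \<union> afn_v W"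
| "afn_c AReceive = {}"
| "afn_c ASelf = {}"

primrec afn_conf :: "aconf \<Rightarrow> nat set" where
  "afn_conf (APar C D) = afn_conf C \<union> afn_conf D"
| "afn_conf (ANu a C) = afn_conf C - {a}"
| "afn_conf (AActor a M Vs) = {a} \<union> afn_c M \<union> (\<Union>V\<in>set Vs. afn_v V)"

text \<open>Gamma is split into a de Bruijn variable context Gv and a name context N.
  avtyp Gv N V A :  Gamma |- V : A ;  actyp Gv N C M A :  Gamma | C |- M : A.\<close>

inductive avtyp :: "ty list \<Rightarrow> (nat \<Rightarrow> ty option) \<Rightarrow> aval \<Rightarrow> ty \<Rightarrow> bool"
  and actyp :: "ty list \<Rightarrow> (nat \<Rightarrow> ty option) \<Rightarrow> ty \<Rightarrow> acomp \<Rightarrow> ty \<Rightarrow> bool" where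
  TVar: "i < length Gv \<Longrightarrow> avtyp Gv N (AVar i) (Gv ! i)"
| TName: "N a = Some T \<Longrightarrow> avtyp Gv N (AName a) T"
| TLam: "actyp (A # Gv) N C M B \<Longrightarrow> avtyp Gv N (ALam M) (TFun A C B)"
| TUnitV: "avtyp Gv N AUnit TUnit"
| TApp: "avtyp Gv N V (TFun A C B) \<Longrightarrow> avtyp Gv N W A \<Longrightarrow> actyp Gv N C (AApp V W) B"
| TLet: "actyp Gv N C M A \<Longrightarrow> actyp (A # Gv) N C M' B \<Longrightarrow> actyp Gv N C (ALet M M') B"
| TReturn: "avtyp Gv N V A \<Longrightarrow> actyp Gv N C (AReturn V) A"
| TSend: "avtyp Gv N V A \<Longrightarrow> avtyp Gv N W (TActorRef A) \<Longrightarrow> actyp Gv N C (ASend V W) TUnit"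
| TReceive: "actyp Gv N A AReceive A"
| TSpawn: "actyp Gv N A M TUnit \<Longrightarrow> actyp Gv N C (ASpawn M) (TActorRef A)"
| TSelf: "actyp Gv N A ASelf (TActorRef A)"

text \<open>aconftyp Gv N D C :  Gamma ; Delta |- C  with Gamma = (Gv, N), Delta = D.\<close>
inductive aconftyp :: "ty list \<Rightarrow> (nat \<Rightarrow> ty option) \<Rightarrow> (nat \<Rightarrow> ty option) \<Rightarrow> aconf \<Rightarrow> bool" where
  TPar: "aconftyp Gv N D1 C1 \<Longrightarrow> aconftyp Gv N D2 C2 \<Longrightarrow> dom D1 \<inter> dom D2 = {}
         \<Longrightarrow> aconftyp Gv N (D1 ++ D2) (APar C1 C2)"
| TPid: "N a = None \<Longrightarrow> D a = None \<Longrightarrow>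
         aconftyp Gv (N(a \<mapsto> TActorRef A)) (D(a \<mapsto> A)) C \<Longrightarrow> aconftyp Gv N D (ANu a C)"
| TActor: "N a = Some (TActorRef A) \<Longrightarrow> actyp Gv N A M TUnit \<Longrightarrow>
         (\<forall>V\<in>set Vs. avtyp Gv N V A) \<Longrightarrow> aconftyp Gv N [a \<mapsto> A] (AActor a M Vs)"

datatype actx = AHole | ALetE actx acomp

primrec aplug :: "actx \<Rightarrow> acomp \<Rightarrow> acomp" where
  "aplug AHole M = M"
| "aplug (ALetE E N) M = ALet (aplug E M) N"

inductive ared_m :: "acomp \<Rightarrow> acomp \<Rightarrow> bool" where
  beta: "ared_m (AApp (ALam M) V) (asubst_c M 0 V)"
| letret: "ared_m (ALet (AReturn V) M) (asubst_c M 0 V)"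
| ctx: "ared_m M M' \<Longrightarrow> ared_m (aplug E M) (aplug E M')"

inductive acong :: "aconf \<Rightarrow> aconf \<Rightarrow> bool" where
  refl: "acong C C"
| sym: "acong C D \<Longrightarrow> acong D C"
| trans: "acong C D \<Longrightarrow> acong D E \<Longrightarrow> acong C E"
| comm: "acong (APar C D) (APar D C)"
| assoc: "acong (APar (APar C D) E) (APar C (APar D E))"
| extr: "a \<notin> afn_conf C \<Longrightarrow> acong (APar C (ANu a D)) (ANu a (APar C D))"
| par: "acong C D \<Longrightarrow> acong (APar C E) (APar D E)"
| nu: "acong C D \<Longrightarrow> acong (ANu a C) (ANu a D)"

inductive ared :: "aconf \<Rightarrow> aconf \<Rightarrow> bool" where
  spawn: "b \<notin> afn_conf (AActor a (aplug E (ASpawn M)) Vs) \<Longrightarrow>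
    ared (AActor a (aplug E (ASpawn M)) Vs)
         (ANu b (APar (AActor a (aplug E (AReturn (AName b))) Vs) (AActor b M [])))"
| send: "ared (APar (AActor a (aplug E (ASend V' (AName b))) Vs) (AActor b M Ws))
              (APar (AActor a (aplug E (AReturn AUnit)) Vs) (AActor b M (Ws @ [V'])))"
| sendself: "ared (AActor a (aplug E (ASend V' (AName a))) Vs)
                  (AActor a (aplug E (AReturn AUnit)) (Vs @ [V']))"
| self: "ared (AActor a (aplug E ASelf) Vs) (AActor a (aplug E (AReturn (AName a))) Vs)"
| receive: "ared (AActor a (aplug E AReceive) (W # Vs)) (AActor a (aplug E (AReturn W)) Vs)"
| lift: "ared_m M1 M2 \<Longrightarrow> ared (AActor a M1 Vs) (AActor a M2 Vs)"
| par: "ared C C' \<Longrightarrow> ared (APar C D) (APar C' D)"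
| nu: "ared C C' \<Longrightarrow> ared (ANu a C) (ANu a C')"
| cong: "acong C C' \<Longrightarrow> ared C' D' \<Longrightarrow> acong D' D \<Longrightarrow> ared C D"

section \<open>lambda_ch syntax and reduction\<close>

datatype cval = CVar nat | CName nat | CLam ccomp | CUnit
and ccomp = CApp cval cval | CLet ccomp ccomp | CReturn cval | CFork ccomp
  | CGive cval cval | CTake cval | CNewCh

datatype cconf = CPar cconf cconf | CNu nat cconf | CBuf nat "cval list" | CThread ccomp

primrec clift_v :: "nat \<Rightarrow> cval \<Rightarrow> cval" and clift_c :: "nat \<Rightarrow> ccomp \<Rightarrow> ccomp" where
  "clift_v k (CVar i) = CVar (if i < k then i else Suc i)"
| "clift_v k (CName a) = CName a"
| "clift_v k (CLam M) = CLam (clift_c (Suc k) M)"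
| "clift_v k CUnit = CUnit"
| "clift_c k (CApp V W) = CApp (clift_v k V) (clift_v k W)"
| "clift_c k (CLet M N) = CLet (clift_c k M) (clift_c (Suc k) N)"
| "clift_c k (CReturn V) = CReturn (clift_v k V)"
| "clift_c k (CFork M) = CFork (clift_c k M)"
| "clift_c k (CGive V W) = CGive (clift_v k V) (clift_v k W)"
| "clift_c k (CTake V) = CTake (clift_v k V)"
| "clift_c k CNewCh = CNewCh"

primrec csubst_v :: "cval \<Rightarrow> nat \<Rightarrow> cval \<Rightarrow> cval"
  and csubst_c :: "ccomp \<Rightarrow> nat \<Rightarrow> cval \<Rightarrow> ccomp" where
  "csubst_v (CVar i) j U = (if i < j then CVar i else if i = j then U else CVar (i - 1))"
| "csubst_v (CName a) j U = CName a"
| "csubst_v (CLam M) j U = CLam (csubst_c M (Suc j) (clift_v 0 U))"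
| "csubst_v CUnit j U = CUnit"
| "csubst_c (CApp V W) j U = CApp (csubst_v V j U) (csubst_v W j U)"
| "csubst_c (CLet M N) j U = CLet (csubst_c M j U) (csubst_c N (Suc j) (clift_v 0 U))"
| "csubst_c (CReturn V) j U = CReturn (csubst_v V j U)"
| "csubst_c (CFork M) j U = CFork (csubst_c M j U)"
| "csubst_c (CGive V W) j U = CGive (csubst_v V j U) (csubst_v W j U)"
| "csubst_c (CTake V) j U = CTake (csubst_v V j U)"
| "csubst_c CNewCh j U = CNewCh"

primrec cfn_v :: "cval \<Rightarrow> nat set" and cfn_c :: "ccomp \<Rightarrow> nat set" where
  "cfn_v (CVar i) = {}"
| "cfn_v (CName a) = {a}"
| "cfn_v (CLam M) = cfn_c M"
| "cfn_v CUnit = {}"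
| "cfn_c (CApp V W) = cfn_v V \<union> cfn_v W"
| "cfn_c (CLet M N) = cfn_c M \<union> cfn_c N"
| "cfn_c (CReturn V) = cfn_v V"
| "cfn_c (CFork M) = cfn_c M"
| "cfn_c (CGive V W) = cfn_v V \<union> cfn_v W"
| "cfn_c (CTake V) = cfn_v V"
| "cfn_c CNewCh = {}"

primrec cfn_conf :: "cconf \<Rightarrow> nat set" where
  "cfn_conf (CPar C D) = cfn_conf C \<union> cfn_conf D"
| "cfn_conf (CNu a C) = cfn_conf C - {a}"
| "cfn_conf (CBuf a Vs) = {a} \<union> (\<Union>V\<in>set Vs. cfn_v V)"
| "cfn_conf (CThread M) = cfn_c M"

datatype cctx = CHole | CLetE cctx ccomp

primrec cplug :: "cctx \<Rightarrow> ccomp \<Rightarrow> ccomp" where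
  "cplug CHole M = M"
| "cplug (CLetE E N) M = CLet (cplug E M) N"

inductive cred_m :: "ccomp \<Rightarrow> ccomp \<Rightarrow> bool" where
  beta: "cred_m (CApp (CLam M) V) (csubst_c M 0 V)"
| letret: "cred_m (CLet (CReturn V) M) (csubst_c M 0 V)"
| ctx: "cred_m M M' \<Longrightarrow> cred_m (cplug E M) (cplug E M')"

inductive ccong :: "cconf \<Rightarrow> cconf \<Rightarrow> bool" where
  refl: "ccong C C"
| sym: "ccong C D \<Longrightarrow> ccong D C"
| trans: "ccong C D \<Longrightarrow> ccong D E \<Longrightarrow> ccong C E"
| comm: "ccong (CPar C D) (CPar D C)"
| assoc: "ccong (CPar (CPar C D) E) (CPar C (CPar D E))"
| extr: "a \<notin> cfn_conf C \<Longrightarrow> ccong (CPar C (CNu a D)) (CNu a (CPar C D))"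
| par: "ccong C D \<Longrightarrow> ccong (CPar C E) (CPar D E)"
| nu: "ccong C D \<Longrightarrow> ccong (CNu a C) (CNu a D)"

inductive cred :: "cconf \<Rightarrow> cconf \<Rightarrow> bool" where
  give: "cred (CPar (CThread (cplug E (CGive W (CName a)))) (CBuf a Vs))
              (CPar (CThread (cplug E (CReturn CUnit))) (CBuf a (Vs @ [W])))"
| take: "cred (CPar (CThread (cplug E (CTake (CName a)))) (CBuf a (W # Vs)))
              (CPar (CThread (cplug E (CReturn W))) (CBuf a Vs))"
| fork: "cred (CThread (cplug E (CFork M))) (CPar (CThread (cplug E (CReturn CUnit))) (CThread M))"
| newch: "a \<notin> cfn_c (cplug E CNewCh) \<Longrightarrow>
    cred (CThread (cplug E CNewCh)) (CNu a (CPar (CThread (cplug E (CReturn (CName a)))) (CBuf a [])))"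
| lift: "cred_m M1 M2 \<Longrightarrow> cred (CThread M1) (CThread M2)"
| par: "cred C C' \<Longrightarrow> cred (CPar C D) (CPar C' D)"
| nu: "cred C C' \<Longrightarrow> cred (CNu a C) (CNu a C')"
| cong: "ccong C C' \<Longrightarrow> cred C' D' \<Longrightarrow> ccong D' D \<Longrightarrow> cred C D"

section \<open>Translation\<close>

text \<open>trv rho V and trc rho M ch translate with a variable renaming rho (needed
  because the translation inserts the extra binder ch in de Bruijn form);
  the top-level translation uses rho = id.\<close>

definition ren_ext :: "(nat \<Rightarrow> nat) \<Rightarrow> nat \<Rightarrow> nat" where
  "ren_ext \<rho> i = (case i of 0 \<Rightarrow> 0 | Suc j \<Rightarrow> Suc (\<rho> j))"

primrec trv :: "(nat \<Rightarrow> nat) \<Rightarrow> aval \<Rightarrow> cval"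
  and trc :: "(nat \<Rightarrow> nat) \<Rightarrow> acomp \<Rightarrow> cval \<Rightarrow> ccomp" where
  "trv \<rho> (AVar i) = CVar (\<rho> i)"
| "trv \<rho> (AName a) = CName a"
| "trv \<rho> (ALam M) = CLam (CReturn (CLam (trc (Suc \<circ> ren_ext \<rho>) M (CVar 0))))"
  \<comment> \<open>[lambda x. M] = lambda x. return (lambda ch. ([M] ch)), fine-grain reading of lambda x. lambda ch. ([M] ch)\<close>
| "trv \<rho> AUnit = CUnit"
| "trc \<rho> (AApp V W) ch = CLet (CApp (trv \<rho> V) (trv \<rho> W)) (CApp (CVar 0) (clift_v 0 ch))"
| "trc \<rho> (ALet M N) ch = CLet (trc \<rho> M ch) (trc (ren_ext \<rho>) N (clift_v 0 ch))"
| "trc \<rho> (AReturn V) ch = CReturn (trv \<rho> V)"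
| "trc \<rho> (ASpawn M) ch =
     CLet CNewCh (CLet (CFork (trc (Suc \<circ> \<rho>) M (CVar 0))) (CReturn (CVar 1)))"
| "trc \<rho> (ASend V W) ch = CGive (trv \<rho> V) (trv \<rho> W)"
| "trc \<rho> AReceive ch = CTake ch"
| "trc \<rho> ASelf ch = CReturn ch"

primrec trconf :: "aconf \<Rightarrow> cconf" where
  "trconf (APar C D) = CPar (trconf C) (trconf D)"
| "trconf (ANu a C) = CNu a (trconf C)"
| "trconf (AActor a M Vs) = CPar (CBuf a (map (trv id) Vs)) (CThread (trc id M (CName a)))"

end

theory Submission imports Defs begin

text \<open>Each reduction rule of lambda_act is matched by a short reduction sequence of its
translation. A send, receive or self step becomes a single give or take step (or no step
at all, since self is translated to a return); a spawn becomes newCh, a let-return and a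
fork, after which only a rearrangement of buffers and threads by structural congruence is
left; a beta or let step becomes the corresponding administrative beta and let steps,
because the translation commutes with substitution. The structural rules carry over since
the translation is compositional and does not create free names.\<close>

section \<open>Renaming and substitution through the translation\<close>

definition lift_idx :: "nat \<Rightarrow> nat \<Rightarrow> nat" where
  "lift_idx k i = (if i < k then i else Suc i)"

lemma lift_idx_0: "lift_idx 0 = Suc"
  by (simp add: fun_eq_iff lift_idx_def)

lemma ren_ext_id [simp]: "ren_ext id = id" "ren_ext (\<lambda>x. x) = (\<lambda>x. x)"
  by (auto simp: fun_eq_iff ren_ext_def split: nat.split)

lemma lift_idx_comp_ren_ext [simp]:
  "lift_idx (Suc k) \<circ> ren_ext \<rho> = ren_ext (lift_idx k \<circ> \<rho>)"
  "lift_idx (Suc (Suc k)) \<circ> (Suc \<circ> ren_ext \<rho>) = Suc \<circ> ren_ext (lift_idx k \<circ> \<rho>)"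
  "lift_idx (Suc k) \<circ> (Suc \<circ> \<rho>) = Suc \<circ> (lift_idx k \<circ> \<rho>)"
  by (auto simp: fun_eq_iff lift_idx_def ren_ext_def split: nat.split)

lemma ren_ext_comp_lift_idx [simp]:
  "ren_ext \<rho> \<circ> lift_idx (Suc k) = ren_ext (\<rho> \<circ> lift_idx k)"
  "Suc \<circ> ren_ext \<rho> \<circ> lift_idx (Suc k) = Suc \<circ> ren_ext (\<rho> \<circ> lift_idx k)"
  "Suc \<circ> \<rho> \<circ> lift_idx k = Suc \<circ> (\<rho> \<circ> lift_idx k)"
  by (auto simp: fun_eq_iff lift_idx_def ren_ext_def split: nat.split)

text \<open>The channel argument of the translation is always a variable or a name; the
commutation lemmas below fail for other values.\<close>

fun atomic_cval :: "cval \<Rightarrow> bool" where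
  "atomic_cval (CVar _) = True"
| "atomic_cval (CName _) = True"
| "atomic_cval _ = False"

lemma atomic_cval_clift: "atomic_cval ch \<Longrightarrow> atomic_cval (clift_v k ch)"
  by (cases ch) auto

lemma clift_clift_atomic:
  "atomic_cval ch \<Longrightarrow> clift_v (Suc k) (clift_v 0 ch) = clift_v 0 (clift_v k ch)"
  by (cases ch) auto

lemma clift_trv: "clift_v k (trv \<rho> V) = trv (lift_idx k \<circ> \<rho>) V"
  and clift_trc:
    "atomic_cval ch \<Longrightarrow> clift_c k (trc \<rho> M ch) = trc (lift_idx k \<circ> \<rho>) M (clift_v k ch)"
  by (induction V and M arbitrary: k \<rho> and k \<rho> ch)
    (auto simp: lift_idx_def atomic_cval_clift clift_clift_atomic)

lemma trv_alift: "trv \<rho> (alift_v k V) = trv (\<rho> \<circ> lift_idx k) V"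
  and trc_alift: "trc \<rho> (alift_c k M) ch = trc (\<rho> \<circ> lift_idx k) M ch"
  by (induction V and M arbitrary: k \<rho> and k \<rho> ch) (auto simp: lift_idx_def)

lemma clift0_trv: "clift_v 0 (trv \<rho> V) = trv (Suc \<circ> \<rho>) V"
  using clift_trv[of 0 \<rho> V] by (simp add: lift_idx_0)

lemma trv_alift0: "trv \<rho> (alift_v 0 V) = trv (\<rho> \<circ> Suc) V"
  using trv_alift[of \<rho> 0 V] by (simp add: lift_idx_0)

text \<open>A single substitution does not commute with the translation directly (the translation
inserts channel binders), so we pass through simultaneous substitutions.\<close>

definition cexts :: "(nat \<Rightarrow> cval) \<Rightarrow> nat \<Rightarrow> cval" where
  "cexts s i = (case i of 0 \<Rightarrow> CVar 0 | Suc j \<Rightarrow> clift_v 0 (s j))"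

definition aexts :: "(nat \<Rightarrow> aval) \<Rightarrow> nat \<Rightarrow> aval" where
  "aexts s i = (case i of 0 \<Rightarrow> AVar 0 | Suc j \<Rightarrow> alift_v 0 (s j))"

lemma cexts_simps [simp]: "cexts s 0 = CVar 0" "cexts s (Suc j) = clift_v 0 (s j)"
  by (auto simp: cexts_def)

lemma aexts_simps [simp]: "aexts s 0 = AVar 0" "aexts s (Suc j) = alift_v 0 (s j)"
  by (auto simp: aexts_def)

lemma aexts_AVar [simp]: "aexts AVar = AVar"
  by (auto simp: fun_eq_iff aexts_def split: nat.split)

primrec cpsubst_v :: "(nat \<Rightarrow> cval) \<Rightarrow> cval \<Rightarrow> cval"
  and cpsubst_c :: "(nat \<Rightarrow> cval) \<Rightarrow> ccomp \<Rightarrow> ccomp" where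
  "cpsubst_v s (CVar i) = s i"
| "cpsubst_v s (CName a) = CName a"
| "cpsubst_v s (CLam M) = CLam (cpsubst_c (cexts s) M)"
| "cpsubst_v s CUnit = CUnit"
| "cpsubst_c s (CApp V W) = CApp (cpsubst_v s V) (cpsubst_v s W)"
| "cpsubst_c s (CLet M N) = CLet (cpsubst_c s M) (cpsubst_c (cexts s) N)"
| "cpsubst_c s (CReturn V) = CReturn (cpsubst_v s V)"
| "cpsubst_c s (CFork M) = CFork (cpsubst_c s M)"
| "cpsubst_c s (CGive V W) = CGive (cpsubst_v s V) (cpsubst_v s W)"
| "cpsubst_c s (CTake V) = CTake (cpsubst_v s V)"
| "cpsubst_c s CNewCh = CNewCh"

primrec apsubst_v :: "(nat \<Rightarrow> aval) \<Rightarrow> aval \<Rightarrow> aval"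
  and apsubst_c :: "(nat \<Rightarrow> aval) \<Rightarrow> acomp \<Rightarrow> acomp" where
  "apsubst_v s (AVar i) = s i"
| "apsubst_v s (AName a) = AName a"
| "apsubst_v s (ALam M) = ALam (apsubst_c (aexts s) M)"
| "apsubst_v s AUnit = AUnit"
| "apsubst_c s (AApp V W) = AApp (apsubst_v s V) (apsubst_v s W)"
| "apsubst_c s (ALet M N) = ALet (apsubst_c s M) (apsubst_c (aexts s) N)"
| "apsubst_c s (AReturn V) = AReturn (apsubst_v s V)"
| "apsubst_c s (ASpawn M) = ASpawn (apsubst_c s M)"
| "apsubst_c s (ASend V W) = ASend (apsubst_v s V) (apsubst_v s W)"
| "apsubst_c s AReceive = AReceive"
| "apsubst_c s ASelf = ASelf"

definition csubst_fun :: "nat \<Rightarrow> cval \<Rightarrow> nat \<Rightarrow> cval" where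
  "csubst_fun j U i = (if i < j then CVar i else if i = j then U else CVar (i - 1))"

definition asubst_fun :: "nat \<Rightarrow> aval \<Rightarrow> nat \<Rightarrow> aval" where
  "asubst_fun j U i = (if i < j then AVar i else if i = j then U else AVar (i - 1))"

lemma cexts_csubst_fun [simp]: "cexts (csubst_fun j U) = csubst_fun (Suc j) (clift_v 0 U)"
  by (auto simp: fun_eq_iff csubst_fun_def cexts_def split: nat.split)

lemma aexts_asubst_fun [simp]: "aexts (asubst_fun j U) = asubst_fun (Suc j) (alift_v 0 U)"
  by (auto simp: fun_eq_iff asubst_fun_def aexts_def split: nat.split)

lemma csubst_eq_cpsubst:
  "csubst_v V j U = cpsubst_v (csubst_fun j U) V"
  "csubst_c M j U = cpsubst_c (csubst_fun j U) M"
  by (induction V and M arbitrary: j U and j U) (auto simp: csubst_fun_def)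

lemma asubst_eq_apsubst:
  "asubst_v V j U = apsubst_v (asubst_fun j U) V"
  "asubst_c M j U = apsubst_c (asubst_fun j U) M"
  by (induction V and M arbitrary: j U and j U) (auto simp: asubst_fun_def)

lemma apsubst_AVar: "apsubst_v AVar V = V" "apsubst_c AVar M = M"
  by (induction V and M) auto

lemma cexts_atomic:
  "atomic_cval ch \<Longrightarrow> cpsubst_v (cexts \<sigma>) (clift_v 0 ch) = clift_v 0 (cpsubst_v \<sigma> ch)"
  by (cases ch) auto

lemma cexts_agrees_ren_ext:
  assumes "\<forall>i. \<sigma> (\<rho> i) = trv \<rho>' (\<tau> i)"
  shows "\<forall>i. cexts \<sigma> (ren_ext \<rho> i) = trv (ren_ext \<rho>') (aexts \<tau> i)"
proof
  fix i
  have "ren_ext \<rho>' \<circ> Suc = Suc \<circ> \<rho>'"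
    by (auto simp: fun_eq_iff ren_ext_def)
  then show "cexts \<sigma> (ren_ext \<rho> i) = trv (ren_ext \<rho>') (aexts \<tau> i)"
    using assms by (cases i) (simp_all add: ren_ext_def clift0_trv trv_alift0)
qed

lemma cpsubst_trv: "\<forall>i. \<sigma> (\<rho> i) = trv \<rho>' (\<tau> i) \<Longrightarrow>
    cpsubst_v \<sigma> (trv \<rho> V) = trv \<rho>' (apsubst_v \<tau> V)"
  and cpsubst_trc: "\<forall>i. \<sigma> (\<rho> i) = trv \<rho>' (\<tau> i) \<Longrightarrow> atomic_cval ch \<Longrightarrow>
    cpsubst_c \<sigma> (trc \<rho> M ch) = trc \<rho>' (apsubst_c \<tau> M) (cpsubst_v \<sigma> ch)"
proof (induction V and M arbitrary: \<sigma> \<rho> \<rho>' \<tau> and \<sigma> \<rho> \<rho>' \<tau> ch)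
  case (ALam M)
  have "\<forall>i. cexts (cexts \<sigma>) ((Suc \<circ> ren_ext \<rho>) i) = trv (Suc \<circ> ren_ext \<rho>') (aexts \<tau> i)"
    using cexts_agrees_ren_ext[of \<sigma> \<rho> \<rho>' \<tau>, OF ALam.prems] by (simp add: clift0_trv)
  from ALam.IH[of "cexts (cexts \<sigma>)" "Suc \<circ> ren_ext \<rho>" "Suc \<circ> ren_ext \<rho>'" "aexts \<tau>" "CVar 0",
      OF this]
  show ?case
    by (simp add: comp_def)
next
  case (ALet M N)
  show ?case
    using ALet.IH(1)[of \<sigma> \<rho> \<rho>' \<tau> ch, OF ALet.prems]
      ALet.IH(2)[of "cexts \<sigma>" "ren_ext \<rho>" "ren_ext \<rho>'" "aexts \<tau>" "clift_v 0 ch",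
        OF cexts_agrees_ren_ext[of \<sigma> \<rho> \<rho>' \<tau>, OF ALet.prems(1)]
          atomic_cval_clift[OF ALet.prems(2)]]
      cexts_atomic[OF ALet.prems(2)]
    by simp
next
  case (AApp V W)
  then show ?case by (simp add: cexts_atomic)
next
  case (ASpawn M)
  have "\<forall>i. cexts \<sigma> ((Suc \<circ> \<rho>) i) = trv (Suc \<circ> \<rho>') (\<tau> i)"
    using ASpawn.prems(1) by (simp add: clift0_trv)
  from ASpawn.IH[of "cexts \<sigma>" "Suc \<circ> \<rho>" "Suc \<circ> \<rho>'" \<tau> "CVar 0", OF this]
  show ?case
    by (simp add: comp_def)
qed auto

text \<open>In a translated abstraction the channel binder sits between the abstracted variable
and the body, so the substitution acts on index 1.\<close>

lemma trc_subst_lam_body: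
  "csubst_c (trc Suc M (CVar 0)) 1 (clift_v 0 (trv id V)) = trc Suc (asubst_c M 0 V) (CVar 0)"
proof -
  have "\<forall>i. csubst_fun 1 (clift_v 0 (trv id V)) (Suc i) = trv Suc (asubst_fun 0 V i)"
    by (auto simp: csubst_fun_def asubst_fun_def clift0_trv)
  from cpsubst_trc[of "csubst_fun 1 (clift_v 0 (trv id V))" Suc Suc "asubst_fun 0 V" "CVar 0" M,
      OF this]
  show ?thesis
    by (simp add: csubst_eq_cpsubst asubst_eq_apsubst csubst_fun_def)
qed

lemma trc_subst_chan: "csubst_c (trc Suc M (CVar 0)) 0 (CName b) = trc id M (CName b)"
proof -
  have "\<forall>i. csubst_fun 0 (CName b) (Suc i) = trv id (AVar i)"
    by (auto simp: csubst_fun_def)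
  from cpsubst_trc[of "csubst_fun 0 (CName b)" Suc id AVar "CVar 0" M, OF this]
  show ?thesis
    by (simp add: csubst_eq_cpsubst csubst_fun_def apsubst_AVar)
qed

lemma trc_subst:
  "csubst_c (trc id N (CName a)) 0 (trv id V) = trc id (asubst_c N 0 V) (CName a)"
proof -
  have "\<forall>i. csubst_fun 0 (trv id V) (id i) = trv id (asubst_fun 0 V i)"
    by (auto simp: csubst_fun_def asubst_fun_def)
  from cpsubst_trc[of "csubst_fun 0 (trv id V)" id id "asubst_fun 0 V" "CName a" N, OF this]
  show ?thesis
    by (simp add: csubst_eq_cpsubst asubst_eq_apsubst)
qed

lemma cfn_clift: "cfn_v (clift_v k V) = cfn_v V" "cfn_c (clift_c k M) = cfn_c M"
  by (induction V and M arbitrary: k and k) auto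

lemma cfn_trv: "cfn_v (trv \<rho> V) \<subseteq> afn_v V"
  and cfn_trc: "cfn_c (trc \<rho> M ch) \<subseteq> afn_c M \<union> cfn_v ch"
proof (induction V and M arbitrary: \<rho> and \<rho> ch)
  case (ALet M N)
  then show ?case
    using ALet.IH(1)[of \<rho> ch] ALet.IH(2)[of "ren_ext \<rho>" "clift_v 0 ch"] by (auto simp: cfn_clift)
next
  case (ALam M)
  then show ?case using ALam.IH[of "Suc \<circ> ren_ext \<rho>" "CVar 0"] by (auto simp: comp_def)
next
  case (ASpawn M)
  then show ?case using ASpawn.IH[of "Suc \<circ> \<rho>" "CVar 0"] by (auto simp: comp_def)
qed (auto simp: cfn_clift)

lemma cfn_trconf: "cfn_conf (trconf C) \<subseteq> afn_conf C"
  by (induction C) (use cfn_trv cfn_trc in fastforce)+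

primrec trctx :: "actx \<Rightarrow> nat \<Rightarrow> cctx" where
  "trctx AHole a = CHole"
| "trctx (ALetE E N) a = CLetE (trctx E a) (trc id N (CName a))"

lemma trc_aplug: "trc id (aplug E M) (CName a) = cplug (trctx E a) (trc id M (CName a))"
  by (induction E) (auto simp: id_def)

primrec ccomp_ctx :: "cctx \<Rightarrow> cctx \<Rightarrow> cctx" where
  "ccomp_ctx CHole F = F"
| "ccomp_ctx (CLetE E N) F = CLetE (ccomp_ctx E F) N"

lemma cplug_ccomp_ctx: "cplug (ccomp_ctx E F) N = cplug E (cplug F N)"
  by (induction E) auto

lemma cred_m_cplug: "cred_m M M' \<Longrightarrow> cred (CThread (cplug E M)) (CThread (cplug E M'))"
  by (intro cred.lift cred_m.ctx)

lemma rtranclp_map: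
  "r\<^sup>*\<^sup>* x y \<Longrightarrow> (\<And>u v. r u v \<Longrightarrow> s (f u) (f v)) \<Longrightarrow> s\<^sup>*\<^sup>* (f x) (f y)"
  by (induction rule: rtranclp.induct) (auto intro: rtranclp.rtrancl_into_rtrancl)

text \<open>A beta step costs three administrative steps: the outer beta, the let that
returns the inner abstraction, and the application of that abstraction to the channel.\<close>

lemma trc_ared_m: "ared_m M M' \<Longrightarrow> cred_m\<^sup>*\<^sup>* (trc id M (CName a)) (trc id M' (CName a))"
proof (induction rule: ared_m.induct)
  case (beta M V)
  define B where "B = trc Suc M (CVar 0)"
  define K where "K = CApp (CVar 0) (CName a)"
  define X where "X = csubst_c B 1 (clift_v 0 (trv id V))"
  have "trc id (AApp (ALam M) V) (CName a) = CLet (CApp (CLam (CReturn (CLam B))) (trv id V)) K"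
    by (simp add: B_def K_def)
  moreover have "cred_m (CLet (CApp (CLam (CReturn (CLam B))) (trv id V)) K)
                        (CLet (CReturn (CLam X)) K)"
    using cred_m.ctx[OF cred_m.beta[of "CReturn (CLam B)" "trv id V"], of "CLetE CHole K"]
    by (simp add: X_def)
  moreover have "cred_m (CLet (CReturn (CLam X)) K) (CApp (CLam X) (CName a))"
    using cred_m.letret[of "CLam X" K] by (simp add: K_def)
  moreover have "cred_m (CApp (CLam X) (CName a)) (csubst_c X 0 (CName a))"
    by (rule cred_m.beta)
  moreover have "csubst_c X 0 (CName a) = trc id (asubst_c M 0 V) (CName a)"
    unfolding X_def B_def trc_subst_lam_body trc_subst_chan ..
  ultimately show ?case
    by (metis converse_rtranclp_into_rtranclp r_into_rtranclp)
next
  case (letret V M)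
  have "cred_m (CLet (CReturn (trv id V)) (trc id M (CName a)))
               (trc id (asubst_c M 0 V) (CName a))"
    unfolding trc_subst[symmetric] by (rule cred_m.letret)
  then show ?case
    by (simp add: r_into_rtranclp id_def)
next
  case (ctx M M' E)
  show ?case
    unfolding trc_aplug by (rule rtranclp_map[OF ctx.IH]) (rule cred_m.ctx)
qed

section \<open>Structural congruence and reduction in context\<close>

lemma ccong_parR: "ccong C D \<Longrightarrow> ccong (CPar E C) (CPar E D)"
  by (rule ccong.trans[OF ccong.comm ccong.trans[OF ccong.par ccong.comm]])

lemma cred_parR: "cred C C' \<Longrightarrow> cred (CPar D C) (CPar D C')"
  by (rule cred.cong[OF ccong.comm cred.par ccong.comm])

lemma cred_rtranclp_par: "cred\<^sup>*\<^sup>* C C' \<Longrightarrow> cred\<^sup>*\<^sup>* (CPar C D) (CPar C' D)"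
  using rtranclp_map[of cred C C' cred "\<lambda>x. CPar x D"] cred.par by blast

lemma cred_rtranclp_parR: "cred\<^sup>*\<^sup>* C C' \<Longrightarrow> cred\<^sup>*\<^sup>* (CPar D C) (CPar D C')"
  using rtranclp_map[of cred C C' cred "CPar D"] cred_parR by blast

lemma cred_rtranclp_nu: "cred\<^sup>*\<^sup>* C C' \<Longrightarrow> cred\<^sup>*\<^sup>* (CNu a C) (CNu a C')"
  using rtranclp_map[of cred C C' cred "CNu a"] cred.nu by blast

lemma ccong_par_exchange:
  "ccong (CPar (CPar A B) (CPar C D)) (CPar (CPar B C) (CPar A D))"
proof -
  note ccong.trans [trans]
  have "ccong (CPar (CPar A B) (CPar C D)) (CPar (CPar B A) (CPar C D))"
    by (rule ccong.par[OF ccong.comm])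
  also have "ccong \<dots> (CPar B (CPar A (CPar C D)))"
    by (rule ccong.assoc)
  also have "ccong \<dots> (CPar B (CPar C (CPar A D)))"
    by (rule ccong_parR[OF ccong.trans[OF ccong.sym[OF ccong.assoc]
          ccong.trans[OF ccong.par[OF ccong.comm] ccong.assoc]]])
  also have "ccong \<dots> (CPar (CPar B C) (CPar A D))"
    by (rule ccong.sym[OF ccong.assoc])
  finally show ?thesis .
qed

lemma ccong_par_regroup:
  "ccong (CPar A (CPar (CPar B C) D)) (CPar (CPar A B) (CPar D C))"
proof -
  note ccong.trans [trans]
  have "ccong (CPar A (CPar (CPar B C) D)) (CPar (CPar A (CPar B C)) D)"
    by (rule ccong.sym[OF ccong.assoc])
  also have "ccong \<dots> (CPar (CPar (CPar A B) C) D)"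
    by (rule ccong.par[OF ccong.sym[OF ccong.assoc]])
  also have "ccong \<dots> (CPar (CPar A B) (CPar C D))"
    by (rule ccong.assoc)
  also have "ccong \<dots> (CPar (CPar A B) (CPar D C))"
    by (rule ccong_parR[OF ccong.comm])
  finally show ?thesis .
qed

lemma trconf_acong: "acong C D \<Longrightarrow> ccong (trconf C) (trconf D)"
proof (induction rule: acong.induct)
  case (extr a C D)
  then have "a \<notin> cfn_conf (trconf C)"
    using cfn_trconf by blast
  then show ?case by (simp add: ccong.extr)
qed (auto intro: ccong.intros)

definition reduces_upto_cong :: "cconf \<Rightarrow> cconf \<Rightarrow> bool" where
  "reduces_upto_cong X Y \<longleftrightarrow> (\<exists>Z. cred\<^sup>*\<^sup>* X Z \<and> ccong Z Y)"

lemma reduces_upto_cong_rtranclp: "cred\<^sup>*\<^sup>* X Y \<Longrightarrow> reduces_upto_cong X Y"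
  using ccong.refl reduces_upto_cong_def by blast

lemma reduces_upto_cong_cred: "cred X Y \<Longrightarrow> reduces_upto_cong X Y"
  by (simp add: r_into_rtranclp reduces_upto_cong_rtranclp)

lemma reduces_upto_cong_par:
  "reduces_upto_cong X Y \<Longrightarrow> reduces_upto_cong (CPar X W) (CPar Y W)"
  unfolding reduces_upto_cong_def using cred_rtranclp_par ccong.par by blast

lemma reduces_upto_cong_nu:
  "reduces_upto_cong X Y \<Longrightarrow> reduces_upto_cong (CNu a X) (CNu a Y)"
  unfolding reduces_upto_cong_def using cred_rtranclp_nu ccong.nu by blast

text \<open>Congruence can be absorbed on the left only because cred itself is closed under
congruence: the first reduction step of the sequence takes it along.\<close>

lemma reduces_upto_cong_ccong:
  assumes "ccong X X'" and "reduces_upto_cong X' Y'" and "ccong Y' Y"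
  shows "reduces_upto_cong X Y"
proof -
  obtain Z where red: "cred\<^sup>*\<^sup>* X' Z" and "ccong Z Y'"
    using assms(2) unfolding reduces_upto_cong_def by blast
  from \<open>ccong Z Y'\<close> assms(3) have ZY: "ccong Z Y"
    by (rule ccong.trans)
  from red show ?thesis
  proof (cases rule: converse_rtranclpE)
    case base
    then have "ccong X Y"
      using assms(1) ZY by (blast intro: ccong.trans)
    then show ?thesis
      unfolding reduces_upto_cong_def by blast
  next
    case (step X1)
    have "cred X X1"
      using cred.cong[OF assms(1) step(1) ccong.refl] .
    then have "cred\<^sup>*\<^sup>* X Z"
      using step(2) by (rule converse_rtranclp_into_rtranclp)
    with ZY show ?thesis
      unfolding reduces_upto_cong_def by blast
  qed
qed

section \<open>Simulation of the individual reduction rules\<close>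

lemma spawned_thread_reduces:
  assumes fresh: "b \<notin> cfn_c (cplug E (trc id (ASpawn M) (CName a)))"
  shows "cred\<^sup>*\<^sup>* (CThread (cplug E (trc id (ASpawn M) (CName a))))
           (CNu b (CPar (CPar (CThread (cplug E (CReturn (CName b))))
                              (CThread (trc id M (CName b)))) (CBuf b [])))"
proof -
  define T where "T = trc id M (CName b)"
  define R where "R = CReturn (CName b)"
  define K where "K = CLet (CFork (trc Suc M (CVar 0))) (CReturn (CVar 1))"
  have spawn_eq: "trc id (ASpawn M) (CName a) = CLet CNewCh K"
    by (simp add: K_def)
  have "b \<notin> cfn_c (cplug (ccomp_ctx E (CLetE CHole K)) CNewCh)"
    using fresh by (simp add: cplug_ccomp_ctx K_def)
  from cred.newch[OF this]
  have "cred (CThread (cplug E (CLet CNewCh K)))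
             (CNu b (CPar (CThread (cplug E (CLet R K))) (CBuf b [])))"
    by (simp add: cplug_ccomp_ctx R_def)
  moreover have "cred (CThread (cplug E (CLet R K))) (CThread (cplug E (CLet (CFork T) R)))"
    using cred_m_cplug[OF cred_m.letret[of "CName b" K]]
    by (simp add: K_def T_def R_def trc_subst_chan)
  moreover have "cred (CThread (cplug E (CLet (CFork T) R)))
                      (CPar (CThread (cplug E (CLet (CReturn CUnit) R))) (CThread T))"
    using cred.fork[of "ccomp_ctx E (CLetE CHole R)" T] by (simp add: cplug_ccomp_ctx)
  moreover have "cred (CThread (cplug E (CLet (CReturn CUnit) R))) (CThread (cplug E R))"
    using cred_m_cplug[OF cred_m.letret[of CUnit R]] by (simp add: R_def)
  ultimately have "cred\<^sup>*\<^sup>* (CThread (cplug E (CLet R K)))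
                                (CPar (CThread (cplug E R)) (CThread T))"
    by (meson converse_rtranclp_into_rtranclp cred.par r_into_rtranclp)
  then have "cred\<^sup>*\<^sup>* (CNu b (CPar (CThread (cplug E (CLet R K))) (CBuf b [])))
                     (CNu b (CPar (CPar (CThread (cplug E R)) (CThread T)) (CBuf b [])))"
    by (intro cred_rtranclp_nu cred_rtranclp_par)
  with \<open>cred (CThread (cplug E (CLet CNewCh K))) _\<close> show ?thesis
    unfolding spawn_eq T_def R_def by (rule converse_rtranclp_into_rtranclp)
qed

lemma simulate_spawn:
  assumes fresh: "b \<notin> afn_conf (AActor a (aplug E (ASpawn M)) Vs)"
  shows "reduces_upto_cong (trconf (AActor a (aplug E (ASpawn M)) Vs))
           (trconf (ANu b (APar (AActor a (aplug E (AReturn (AName b))) Vs) (AActor b M []))))"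
proof -
  define Ba where "Ba = CBuf a (map (trv id) Vs)"
  have "b \<notin> cfn_c (cplug (trctx E a) (trc id (ASpawn M) (CName a)))"
    using fresh cfn_trc[of id "aplug E (ASpawn M)" "CName a"] by (auto simp: trc_aplug)
  from spawned_thread_reduces[OF this]
  have "reduces_upto_cong (CPar Ba (CThread (cplug (trctx E a) (trc id (ASpawn M) (CName a)))))
          (CPar Ba (CNu b (CPar (CPar (CThread (cplug (trctx E a) (CReturn (CName b))))
                                      (CThread (trc id M (CName b)))) (CBuf b []))))"
    by (intro reduces_upto_cong_rtranclp cred_rtranclp_parR)
  moreover have "b \<notin> cfn_conf Ba"
    using fresh cfn_trv by (fastforce simp: Ba_def)
  then have "ccong (CPar Ba (CNu b (CPar (CPar P Q) (CBuf b []))))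
                   (CNu b (CPar (CPar Ba P) (CPar (CBuf b []) Q)))" for P Q
    by (rule ccong.trans[OF ccong.extr ccong.nu[OF ccong_par_regroup]])
  ultimately show ?thesis
    using reduces_upto_cong_ccong[OF ccong.refl] by (simp add: trc_aplug Ba_def)
qed

lemma simulate_send:
  "reduces_upto_cong (trconf (APar (AActor a (aplug E (ASend V' (AName b))) Vs) (AActor b M Ws)))
     (trconf (APar (AActor a (aplug E (AReturn AUnit)) Vs) (AActor b M (Ws @ [V']))))"
  using reduces_upto_cong_cred[OF cred.cong[OF ccong_par_exchange cred.par[OF cred.give]
        ccong.sym[OF ccong_par_exchange]]]
  by (simp add: trc_aplug)

lemma simulate_sendself:
  "reduces_upto_cong (trconf (AActor a (aplug E (ASend V' (AName a))) Vs))
     (trconf (AActor a (aplug E (AReturn AUnit)) (Vs @ [V'])))"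
  using reduces_upto_cong_cred[OF cred.cong[OF ccong.comm cred.give ccong.comm]]
  by (simp add: trc_aplug)

lemma simulate_self:
  "reduces_upto_cong (trconf (AActor a (aplug E ASelf) Vs))
     (trconf (AActor a (aplug E (AReturn (AName a))) Vs))"
  by (simp add: trc_aplug reduces_upto_cong_rtranclp)

lemma simulate_receive:
  "reduces_upto_cong (trconf (AActor a (aplug E AReceive) (W # Vs)))
     (trconf (AActor a (aplug E (AReturn W)) Vs))"
  using reduces_upto_cong_cred[OF cred.cong[OF ccong.comm cred.take ccong.comm]]
  by (simp add: trc_aplug)

lemma simulate_lift:
  assumes "ared_m M1 M2"
  shows "reduces_upto_cong (trconf (AActor a M1 Vs)) (trconf (AActor a M2 Vs))"
proof -
  have "cred\<^sup>*\<^sup>* (CThread (trc id M1 (CName a))) (CThread (trc id M2 (CName a)))"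
    using rtranclp_map[OF trc_ared_m[OF assms]] cred.lift by blast
  then show ?thesis
    by (simp add: cred_rtranclp_parR reduces_upto_cong_rtranclp)
qed

lemma ared_simulation: "ared C1 C2 \<Longrightarrow> reduces_upto_cong (trconf C1) (trconf C2)"
proof (induction rule: ared.induct)
  case spawn
  then show ?case by (rule simulate_spawn)
next
  case send
  show ?case by (rule simulate_send)
next
  case sendself
  show ?case by (rule simulate_sendself)
next
  case self
  show ?case by (rule simulate_self)
next
  case receive
  show ?case by (rule simulate_receive)
next
  case lift
  then show ?case by (rule simulate_lift)
next
  case par
  then show ?case by (simp add: reduces_upto_cong_par)
next
  case nu
  then show ?case by (simp add: reduces_upto_cong_nu)
next
  case cong
  then show ?case using reduces_upto_cong_ccong trconf_acong by blast
qed

theorem theorem21: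
  assumes "aconftyp Gv N D C1"
    and "ared C1 C2"
  shows "\<exists>Dc. cred\<^sup>*\<^sup>* (trconf C1) Dc \<and> ccong Dc (trconf C2)"
  using ared_simulation[OF assms(2)] by (simp add: reduces_upto_cong_def)

end
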